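(* Let $F(\mathcal A)$ be a free group on a finite set $\mathcal A$, let $\psi$ be an automorphism of $F(\mathcal A)$, and let $\Gamma=F(\mathcal A)\rtimes_{(\psi)}F(s,t)$, where $F(s,t)$ is free on $s,t$ and both $s$ and $t$ act by $\psi$ (i.e. $sas^{-1}=tat^{-1}=\psi(a)$). Let $P\colon\mathbb N\to\mathbb N$ be an increasing function such that $d_{\mathcal A}(1,\psi^n(a))\le P(|n|)$ for all $a\in\mathcal A$ and $n\in\mathbb Z$. Then the length function $L$ of the combing $\sigma^{F(s,t)}\cdot\sigma^{F(\mathcal A)}$ of $\Gamma$ satisfies $L(n)\le nP(n)+n$ for all $n$.
   Context: Every $\gamma\in\Gamma$ is uniquely $\gamma=u\cdot g$ with $u\in F(s,t)$, $g\in F(\mathcal A)$. The combing $\sigma^{F(s,t)}\cdot\sigma^{F(\mathcal A)}$ assigns to $\gamma$ the word $\sigma_\gamma$ obtained by concatenating the freely reduced word in $\{s,t\}^{\pm}$ representing $u$ with the freely reduced word in $\mathcal A^{\pm}$ representing $g$. Its length is $L(n)=\max\{|\sigma_\gamma|: d_{\mathcal A\cup\{s,t\}}(1,\gamma)\le n\}$, where $|\sigma_\gamma|$ is the word length of $\sigma_\gamma$ and $d_{\mathcal A\cup\{s,t\}}$, $d_{\mathcal A}$ are word metrics. *)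

theory Defs
  imports Main
begin

text \<open>A letter is a generator with a sign: (x, True) is x, (x, False) is x^-1.\<close>
type_synonym 'g word = "('g \<times> bool) list"

definition inv_letter :: "'g \<times> bool \<Rightarrow> 'g \<times> bool" where
  "inv_letter x = (fst x, \<not> snd x)"

definition inv_word :: "'g word \<Rightarrow> 'g word" where
  "inv_word w = rev (map inv_letter w)"

fun cancel_cons :: "'g \<times> bool \<Rightarrow> 'g word \<Rightarrow> 'g word" where
  "cancel_cons x [] = [x]"
| "cancel_cons x (y # ys) = (if y = inv_letter x then ys else x # y # ys)"

definition reduce :: "'g word \<Rightarrow> 'g word" where
  "reduce w = foldr cancel_cons w []"

fun reduced :: "'g word \<Rightarrow> bool" where
  "reduced (x # y # ys) = (y \<noteq> inv_letter x \<and> reduced (y # ys))"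
| "reduced _ = True"

definition words_on :: "'g set \<Rightarrow> 'g word set" where
  "words_on A = {w. fst ` set w \<subseteq> A}"

definition free_grp :: "'g set \<Rightarrow> 'g word set" where
  "free_grp A = {w. reduced w \<and> w \<in> words_on A}"

definition dist_free :: "'g set \<Rightarrow> 'g word \<Rightarrow> nat" where
  "dist_free A g = (LEAST k. \<exists>w \<in> words_on A. length w = k \<and> reduce w = g)"

definition subst_hom :: "('g \<Rightarrow> 'g word) \<Rightarrow> 'g word \<Rightarrow> 'g word" where
  "subst_hom \<psi> w = reduce (concat (map (\<lambda>(a, b). if b then \<psi> a else inv_word (\<psi> a)) w))"

definition is_aut :: "'g set \<Rightarrow> ('g \<Rightarrow> 'g word) \<Rightarrow> bool" where
  "is_aut A \<psi> \<longleftrightarrow> (\<forall>a \<in> A. \<psi> a \<in> free_grp A) \<and>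
                  bij_betw (subst_hom \<psi>) (free_grp A) (free_grp A)"

definition aut_pow :: "'g set \<Rightarrow> ('g \<Rightarrow> 'g word) \<Rightarrow> int \<Rightarrow> 'g word \<Rightarrow> 'g word" where
  "aut_pow A \<psi> n = (if 0 \<le> n then subst_hom \<psi> ^^ nat n
                     else inv_into (free_grp A) (subst_hom \<psi>) ^^ nat (- n))"

datatype st = S | T

text \<open>An element gamma = u * g of Gamma (u in F(s,t), g in F(A)) is represented by the
  pair (u, g) of freely reduced words. The relations are s a s^-1 = t a t^-1 = psi(a).\<close>
type_synonym 'g gam = "st word \<times> 'g word"

definition sgn_letter :: "st \<times> bool \<Rightarrow> int" where
  "sgn_letter x = (if snd x then 1 else -1)"

text \<open>Right multiplication by a generator of Gamma (from A \<union> {s,t}, or its inverse):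
  u g a^e = u (g a^e);  u g x^e = u x^e psi^{-e}(g) for x \<in> {s,t}.\<close>
fun mult_gen :: "'g set \<Rightarrow> ('g \<Rightarrow> 'g word) \<Rightarrow> 'g gam \<Rightarrow> ('g + st) \<times> bool \<Rightarrow> 'g gam" where
  "mult_gen A \<psi> (u, g) (Inl a, e) = (u, reduce (g @ [(a, e)]))"
| "mult_gen A \<psi> (u, g) (Inr x, e) =
     (reduce (u @ [(x, e)]), aut_pow A \<psi> (- sgn_letter (x, e)) g)"

definition gen_words :: "'g set \<Rightarrow> ('g + st) word set" where
  "gen_words A = {w. \<forall>x \<in> set w. \<forall>a. fst x = Inl a \<longrightarrow> a \<in> A}"

definition eval_gam :: "'g set \<Rightarrow> ('g \<Rightarrow> 'g word) \<Rightarrow> ('g + st) word \<Rightarrow> 'g gam" where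
  "eval_gam A \<psi> w = foldl (mult_gen A \<psi>) ([], []) w"

definition Gam :: "'g set \<Rightarrow> ('g \<Rightarrow> 'g word) \<Rightarrow> 'g gam set" where
  "Gam A \<psi> = eval_gam A \<psi> ` gen_words A"

definition dist_gam :: "'g set \<Rightarrow> ('g \<Rightarrow> 'g word) \<Rightarrow> 'g gam \<Rightarrow> nat" where
  "dist_gam A \<psi> \<gamma> = (LEAST k. \<exists>w \<in> gen_words A. length w = k \<and> eval_gam A \<psi> w = \<gamma>)"

definition comb :: "'g gam \<Rightarrow> ('g + st) word" where
  "comb \<gamma> = map (\<lambda>(x, e). (Inr x, e)) (fst \<gamma>) @ map (\<lambda>(a, e). (Inl a, e)) (snd \<gamma>)"

definition comb_length :: "'g set \<Rightarrow> ('g \<Rightarrow> 'g word) \<Rightarrow> nat \<Rightarrow> nat" where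
  "comb_length A \<psi> n = Max {length (comb \<gamma>) | \<gamma>. \<gamma> \<in> Gam A \<psi> \<and> dist_gam A \<psi> \<gamma> \<le> n}"

end

theory Submission imports Defs begin

text \<open>Follow a word w of length k over A \<union> {s,t} from left to right. Each letter s or t
  acts on the F(A)-part by psi or its inverse, each letter of A is appended to it. Hence the
  F(A)-part of the value of w is a product of at most k factors psi^j(a) or psi^j(a)^-1 with
  a \<in> A and |j| \<le> k, each of length at most P(k), while the F(s,t)-part has length at most k.
  For a geodesic word of length k \<le> n this gives |sigma_gamma| \<le> k + k P(k) \<le> n + n P(n).\<close>

lemma inv_letter_inv_letter [simp]: "inv_letter (inv_letter x) = x"
  by (cases x) (simp add: inv_letter_def)

lemma inv_word_inv_word [simp]: "inv_word (inv_word w) = w"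
  unfolding inv_word_def by (simp add: rev_map comp_def)

lemma inv_word_Nil [simp]: "inv_word [] = []"
  by (simp add: inv_word_def)

lemma inv_word_Cons [simp]: "inv_word (x # w) = inv_word w @ [inv_letter x]"
  by (simp add: inv_word_def)

lemma inv_word_append [simp]: "inv_word (v @ w) = inv_word w @ inv_word v"
  by (simp add: inv_word_def)

lemma reduced_Cons: "reduced (x # w) \<longleftrightarrow> reduced w \<and> (w = [] \<or> hd w \<noteq> inv_letter x)"
  by (cases w) auto

lemma reduced_snoc: "reduced (w @ [y]) \<longleftrightarrow> reduced w \<and> (w = [] \<or> y \<noteq> inv_letter (last w))"
  by (induction w rule: reduced.induct) (auto simp: reduced_Cons)

lemma reduced_inv_word: "reduced w \<Longrightarrow> reduced (inv_word w)"
proof (induction w)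
  case (Cons x w)
  have "last (inv_word w) = inv_letter (hd w)" if "w \<noteq> []"
    using that by (cases w) auto
  moreover have "inv_letter x = inv_letter y \<Longrightarrow> x = y" for y
    by (metis inv_letter_inv_letter)
  ultimately show ?case
    using Cons by (cases "w = []") (auto simp: reduced_snoc reduced_Cons inv_word_def)
qed simp

lemma reduce_Nil [simp]: "reduce [] = []"
  by (simp add: reduce_def)

lemma reduce_Cons: "reduce (x # w) = cancel_cons x (reduce w)"
  by (simp add: reduce_def)

lemma reduced_foldr_cancel_cons: "reduced z \<Longrightarrow> reduced (foldr cancel_cons v z)"
proof (induction v)
  case (Cons x v)
  then show ?case by (cases "foldr cancel_cons v z") (auto simp: reduced_Cons)
qed simp

lemma reduced_reduce: "reduced (reduce w)"
  unfolding reduce_def by (rule reduced_foldr_cancel_cons) simp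

lemma reduce_reduced: "reduced w \<Longrightarrow> reduce w = w"
proof (induction w)
  case (Cons x w)
  then show ?case by (cases w) (auto simp: reduce_Cons reduced_Cons)
qed simp

lemma cancel_cons_inv_letter: "reduced z \<Longrightarrow> cancel_cons x (cancel_cons (inv_letter x) z) = z"
  by (cases z rule: reduced.cases) auto

lemma foldr_cancel_cons_reduce:
  "reduced z \<Longrightarrow> foldr cancel_cons (reduce v) z = foldr cancel_cons v z"
proof (induction v)
  case (Cons x v)
  have "foldr cancel_cons (cancel_cons x r) z = cancel_cons x (foldr cancel_cons r z)"
    if "reduced r" for r
    using that Cons.prems
    by (cases r) (auto simp: reduced_Cons cancel_cons_inv_letter reduced_foldr_cancel_cons)
  with Cons show ?case by (simp add: reduce_Cons reduced_reduce)
qed simp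

lemma reduce_append: "reduce (v @ w) = foldr cancel_cons v (reduce w)"
  by (simp add: reduce_def)

lemma reduce_append_reduce_left: "reduce (reduce v @ w) = reduce (v @ w)"
  by (simp add: reduce_append foldr_cancel_cons_reduce reduced_reduce)

lemma reduce_append_reduce_right: "reduce (v @ reduce w) = reduce (v @ w)"
  by (simp add: reduce_append reduce_reduced reduced_reduce)

lemma reduce_append_inv_word: "reduce (w @ inv_word w) = []"
proof (induction w)
  case (Cons x w)
  have "reduce ((x # w) @ inv_word (x # w)) = reduce (x # (w @ inv_word w) @ [inv_letter x])"
    by simp
  also have "\<dots> = reduce (x # reduce (w @ inv_word w) @ [inv_letter x])"
    using reduce_append_reduce_left[of "w @ inv_word w" "[inv_letter x]"]
    by (simp add: reduce_Cons)
  also have "\<dots> = []" using Cons by (simp add: reduce_Cons)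
  finally show ?case .
qed simp

lemma reduce_inv_word: "reduce (inv_word w) = inv_word (reduce w)"
proof -
  let ?r = "reduce w"
  have "reduce (inv_word ?r @ w @ inv_word w) = reduce (inv_word ?r @ reduce (w @ inv_word w))"
    by (simp add: reduce_append_reduce_right)
  also have "\<dots> = inv_word ?r"
    by (simp add: reduce_append_inv_word reduce_reduced reduced_inv_word reduced_reduce)
  finally have "reduce (inv_word ?r @ w @ inv_word w) = inv_word ?r" .
  moreover have "reduce (inv_word ?r @ w @ inv_word w) = reduce (reduce (inv_word ?r @ ?r) @ inv_word w)"
    using reduce_append_reduce_left[of "inv_word ?r @ w" "inv_word w"]
      reduce_append_reduce_right[of "inv_word ?r" w]
      reduce_append_reduce_left[of "inv_word ?r @ ?r" "inv_word w"]
    by simp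
  moreover have "reduce (inv_word ?r @ ?r) = []"
    using reduce_append_inv_word[of "inv_word ?r"] by simp
  ultimately show ?thesis by simp
qed

lemma set_reduce: "set (reduce w) \<subseteq> set w"
proof (induction w)
  case (Cons x w)
  then show ?case by (cases "reduce w") (auto simp: reduce_Cons)
qed simp

lemma length_reduce: "length (reduce w) \<le> length w"
proof (induction w)
  case (Cons x w)
  then show ?case by (cases "reduce w") (auto simp: reduce_Cons)
qed simp

lemma free_grp_reduce: "w \<in> words_on A \<Longrightarrow> reduce w \<in> free_grp A"
  using set_reduce[of w] by (auto simp: free_grp_def words_on_def reduced_reduce)

lemma free_grp_mult: "x \<in> free_grp A \<Longrightarrow> y \<in> free_grp A \<Longrightarrow> reduce (x @ y) \<in> free_grp A"
  by (rule free_grp_reduce) (auto simp: free_grp_def words_on_def)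

lemma free_grp_inv_word: "x \<in> free_grp A \<Longrightarrow> inv_word x \<in> free_grp A"
  using reduced_inv_word[of x]
  by (auto simp: free_grp_def words_on_def inv_word_def inv_letter_def)

lemma concat_in_words_on: "set L \<subseteq> free_grp A \<Longrightarrow> concat L \<in> words_on A"
  unfolding words_on_def free_grp_def by auto

lemma free_grp_Nil [simp]: "[] \<in> free_grp A"
  by (simp add: free_grp_def words_on_def)

lemma free_grp_letter: "a \<in> A \<Longrightarrow> [(a, e)] \<in> free_grp A"
  by (simp add: free_grp_def words_on_def)

lemma length_le_dist_free: "g \<in> free_grp A \<Longrightarrow> length g \<le> dist_free A g"
proof -
  assume g: "g \<in> free_grp A"
  then have "\<exists>k. \<exists>w \<in> words_on A. length w = k \<and> reduce w = g"
    by (auto simp: free_grp_def reduce_reduced intro!: bexI[of _ g])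
  from LeastI_ex[OF this] obtain w where "length w = dist_free A g" "reduce w = g"
    unfolding dist_free_def by blast
  then show ?thesis using length_reduce[of w] by simp
qed

definition free_endo :: "'g set \<Rightarrow> ('g word \<Rightarrow> 'g word) \<Rightarrow> bool" where
  "free_endo A f \<longleftrightarrow> (\<forall>x \<in> free_grp A. f x \<in> free_grp A) \<and>
     (\<forall>x \<in> free_grp A. \<forall>y \<in> free_grp A. f (reduce (x @ y)) = reduce (f x @ f y)) \<and>
     (\<forall>x \<in> free_grp A. f (inv_word x) = inv_word (f x))"

lemma free_endo_Nil:
  assumes "free_endo A f" shows "f [] = []"
proof -
  have "f [] = reduce (f [] @ f [])"
    using assms unfolding free_endo_def by (metis append_Nil free_grp_Nil reduce_Nil)
  moreover have "f [] = inv_word (f [])"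
    using assms unfolding free_endo_def by (metis free_grp_Nil inv_word_Nil)
  ultimately show ?thesis by (metis reduce_append_inv_word)
qed

lemma free_endo_reduce_concat:
  assumes f: "free_endo A f" and L: "set L \<subseteq> free_grp A"
  shows "f (reduce (concat L)) = reduce (concat (map f L))"
  using L
proof (induction L)
  case (Cons x L)
  have "reduce (concat L) \<in> free_grp A"
    using Cons.prems by (intro free_grp_reduce concat_in_words_on) simp
  then have "f (reduce (x @ reduce (concat L))) = reduce (f x @ f (reduce (concat L)))"
    using f Cons.prems unfolding free_endo_def by simp
  with Cons show ?case by (simp add: reduce_append_reduce_right)
qed (simp add: free_endo_Nil[OF f])

lemma free_endo_id: "free_endo A id"
  by (simp add: free_endo_def reduce_reduced free_grp_def)

lemma free_endo_comp: "free_endo A f \<Longrightarrow> free_endo A g \<Longrightarrow> free_endo A (f \<circ> g)"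
  by (simp add: free_endo_def)

lemma free_endo_funpow: "free_endo A f \<Longrightarrow> free_endo A (f ^^ n)"
  by (induction n) (simp_all add: free_endo_id free_endo_comp)

lemma free_endo_inv_into:
  assumes f: "free_endo A f" and bij: "bij_betw f (free_grp A) (free_grp A)"
  shows "free_endo A (inv_into (free_grp A) f)"
proof -
  let ?g = "inv_into (free_grp A) f"
  have g: "x \<in> free_grp A \<Longrightarrow> ?g x \<in> free_grp A" for x
    using bij by (metis bij_betw_apply bij_betw_inv_into)
  have f_g: "x \<in> free_grp A \<Longrightarrow> f (?g x) = x" for x
    using bij by (simp add: bij_betw_def f_inv_into_f)
  have g_eq: "y \<in> free_grp A \<Longrightarrow> ?g (f y) = y" for y
    using bij by (simp add: bij_betw_def)
  show ?thesis
    using f g f_g g_eq[OF free_grp_mult[OF g g]] g_eq[OF free_grp_inv_word[OF g]]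
    by (simp add: free_endo_def free_grp_mult free_grp_inv_word)
qed

definition subst_letter :: "('g \<Rightarrow> 'g word) \<Rightarrow> 'g \<times> bool \<Rightarrow> 'g word" where
  "subst_letter \<psi> = (\<lambda>(a, b). if b then \<psi> a else inv_word (\<psi> a))"

lemma subst_hom_eq: "subst_hom \<psi> w = reduce (concat (map (subst_letter \<psi>) w))"
  by (simp add: subst_hom_def subst_letter_def)

lemma subst_letter_inv_letter: "subst_letter \<psi> (inv_letter x) = inv_word (subst_letter \<psi> x)"
  by (cases x) (auto simp: subst_letter_def inv_letter_def)

lemma subst_hom_reduce: "subst_hom \<psi> (reduce v) = subst_hom \<psi> v"
proof (induction v)
  case (Cons x v)
  let ?img = "\<lambda>w. concat (map (subst_letter \<psi>) w)"
  have cancel: "reduce (?img (cancel_cons x r)) = reduce (?img (x # r))" for r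
  proof (cases r)
    case (Cons y ys)
    have "reduce (subst_letter \<psi> x @ inv_word (subst_letter \<psi> x) @ ?img ys) = reduce (?img ys)"
      by (metis append.assoc append_Nil reduce_append_inv_word reduce_append_reduce_left)
    with Cons show ?thesis by (auto simp: subst_letter_inv_letter)
  qed simp
  have "subst_hom \<psi> (reduce (x # v)) = reduce (subst_letter \<psi> x @ subst_hom \<psi> (reduce v))"
    by (simp add: subst_hom_eq reduce_Cons cancel reduce_append_reduce_right)
  with Cons show ?case by (simp add: subst_hom_eq reduce_append_reduce_right)
qed simp

lemma subst_hom_mult: "subst_hom \<psi> (reduce (v @ w)) = reduce (subst_hom \<psi> v @ subst_hom \<psi> w)"
  unfolding subst_hom_reduce
  by (simp add: subst_hom_eq reduce_append_reduce_left reduce_append_reduce_right)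

lemma subst_hom_inv_word: "subst_hom \<psi> (inv_word v) = inv_word (subst_hom \<psi> v)"
proof -
  have "concat (map (subst_letter \<psi>) (inv_word v)) = inv_word (concat (map (subst_letter \<psi>) v))"
    by (induction v) (simp_all add: subst_letter_inv_letter)
  then show ?thesis by (simp add: subst_hom_eq reduce_inv_word)
qed

lemma free_endo_subst_hom:
  assumes "\<forall>a \<in> A. \<psi> a \<in> free_grp A"
  shows "free_endo A (subst_hom \<psi>)"
proof -
  have "subst_letter \<psi> x \<in> free_grp A" if "fst x \<in> A" for x
    using assms that free_grp_inv_word by (cases x) (auto simp: subst_letter_def)
  then have "subst_hom \<psi> x \<in> free_grp A" if "x \<in> free_grp A" for x
    using that unfolding subst_hom_eq
    by (intro free_grp_reduce) (fastforce simp: words_on_def free_grp_def)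
  then show ?thesis
    by (simp add: free_endo_def subst_hom_mult subst_hom_inv_word)
qed

context
  fixes A :: "'g set" and \<psi> :: "'g \<Rightarrow> 'g word"
  assumes aut: "is_aut A \<psi>"
begin

lemma bij_subst_hom: "bij_betw (subst_hom \<psi>) (free_grp A) (free_grp A)"
  using aut by (simp add: is_aut_def)

lemma free_endo_aut_pow: "free_endo A (aut_pow A \<psi> j)"
proof -
  have h: "free_endo A (subst_hom \<psi>)"
    using aut by (simp add: is_aut_def free_endo_subst_hom)
  show ?thesis
    unfolding aut_pow_def using h free_endo_inv_into[OF h bij_subst_hom]
    by (simp add: free_endo_funpow)
qed

lemma aut_pow_in_free_grp: "x \<in> free_grp A \<Longrightarrow> aut_pow A \<psi> j x \<in> free_grp A"
  using free_endo_aut_pow by (simp add: free_endo_def)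

lemma aut_pow_succ:
  assumes x: "x \<in> free_grp A"
  shows "aut_pow A \<psi> (j + 1) x = subst_hom \<psi> (aut_pow A \<psi> j x)"
proof (cases "0 \<le> j")
  case True
  then have "nat (j + 1) = Suc (nat j)" by simp
  with True show ?thesis by (simp add: aut_pow_def)
next
  case False
  let ?g = "inv_into (free_grp A) (subst_hom \<psi>)"
  have "nat (- j) = Suc (nat (- (j + 1)))" using False by simp
  then have "aut_pow A \<psi> j x = ?g (aut_pow A \<psi> (j + 1) x)"
    using False by (simp add: aut_pow_def)
  moreover have "aut_pow A \<psi> (j + 1) x \<in> free_grp A" by (rule aut_pow_in_free_grp[OF x])
  ultimately show ?thesis
    using bij_subst_hom by (simp add: bij_betw_def f_inv_into_f)
qed

lemma aut_pow_pred:
  assumes x: "x \<in> free_grp A"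
  shows "aut_pow A \<psi> (j - 1) x = inv_into (free_grp A) (subst_hom \<psi>) (aut_pow A \<psi> j x)"
  using aut_pow_succ[OF x, of "j - 1"] aut_pow_in_free_grp[OF x] bij_subst_hom
  by (simp add: bij_betw_def)

lemma aut_pow_aut_pow:
  assumes x: "x \<in> free_grp A"
  shows "aut_pow A \<psi> i (aut_pow A \<psi> j x) = aut_pow A \<psi> (i + j) x"
proof (induction i rule: int_induct[where k = 0])
  case base
  show ?case by (simp add: aut_pow_def)
next
  case (step1 i)
  have "aut_pow A \<psi> (i + 1) (aut_pow A \<psi> j x) = subst_hom \<psi> (aut_pow A \<psi> (i + j) x)"
    using aut_pow_succ[OF aut_pow_in_free_grp[OF x], of i] step1 by simp
  also have "\<dots> = aut_pow A \<psi> (i + 1 + j) x"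
    using aut_pow_succ[OF x, of "i + j"] by (simp add: ac_simps)
  finally show ?case .
next
  case (step2 i)
  have "aut_pow A \<psi> (i - 1) (aut_pow A \<psi> j x)
      = inv_into (free_grp A) (subst_hom \<psi>) (aut_pow A \<psi> (i + j) x)"
    using aut_pow_pred[OF aut_pow_in_free_grp[OF x], of i] step2 by simp
  also have "\<dots> = aut_pow A \<psi> (i - 1 + j) x"
    using aut_pow_pred[OF x, of "i + j"] by (simp add: algebra_simps)
  finally show ?case .
qed

end

subsection \<open>Normal form of products of generators of \<Gamma>\<close>

definition pieces_prod :: "'g set \<Rightarrow> ('g \<Rightarrow> 'g word) \<Rightarrow> (('g \<times> bool) \<times> int) list \<Rightarrow> 'g word" where
  "pieces_prod A \<psi> ps = reduce (concat (map (\<lambda>(x, j). aut_pow A \<psi> j [x]) ps))"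

definition pieces_bounded :: "'g set \<Rightarrow> ('g \<Rightarrow> 'g word) \<Rightarrow> nat \<Rightarrow> 'g gam \<Rightarrow> bool" where
  "pieces_bounded A \<psi> k \<gamma> \<longleftrightarrow> length (fst \<gamma>) \<le> k \<and>
     (\<exists>ps. length ps \<le> k \<and> set ps \<subseteq> (A \<times> UNIV) \<times> {- int k..int k} \<and>
          snd \<gamma> = pieces_prod A \<psi> ps)"

lemma aut_pow_pieces_prod:
  assumes aut: "is_aut A \<psi>" and ps: "set ps \<subseteq> (A \<times> UNIV) \<times> UNIV"
  shows "aut_pow A \<psi> m (pieces_prod A \<psi> ps) = pieces_prod A \<psi> (map (\<lambda>(x, j). (x, m + j)) ps)"
proof -
  let ?F = "\<lambda>(x, j). aut_pow A \<psi> j [x]"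
  have letter: "[x] \<in> free_grp A" if "(x, j) \<in> set ps" for x j
    using that ps by (cases x) (auto simp: free_grp_letter)
  then have "set (map ?F ps) \<subseteq> free_grp A"
    using aut_pow_in_free_grp[OF aut] by auto
  then have "aut_pow A \<psi> m (pieces_prod A \<psi> ps) = reduce (concat (map (aut_pow A \<psi> m) (map ?F ps)))"
    unfolding pieces_prod_def by (rule free_endo_reduce_concat[OF free_endo_aut_pow[OF aut]])
  also have "map (aut_pow A \<psi> m) (map ?F ps) = map ?F (map (\<lambda>(x, j). (x, m + j)) ps)"
    using letter aut_pow_aut_pow[OF aut] by (auto intro!: map_cong)
  finally show ?thesis by (simp only: pieces_prod_def)
qed

lemma pieces_bounded_mult_gen:
  assumes aut: "is_aut A \<psi>" and \<gamma>: "pieces_bounded A \<psi> k \<gamma>"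
    and y: "\<forall>a. fst y = Inl a \<longrightarrow> a \<in> A"
  shows "pieces_bounded A \<psi> (Suc k) (mult_gen A \<psi> \<gamma> y)"
proof -
  obtain u g where ug: "\<gamma> = (u, g)" by fastforce
  from \<gamma> ug obtain ps where u: "length u \<le> k" and len: "length ps \<le> k"
    and ps: "set ps \<subseteq> (A \<times> UNIV) \<times> {- int k..int k}" and g: "g = pieces_prod A \<psi> ps"
    unfolding pieces_bounded_def by auto
  obtain z e where ze: "y = (z, e)" by fastforce
  show ?thesis
  proof (cases z)
    case (Inl a)
    have "aut_pow A \<psi> 0 [(a, e)] = [(a, e)]" by (simp add: aut_pow_def)
    then have "reduce (g @ [(a, e)]) = pieces_prod A \<psi> (ps @ [((a, e), 0)])"
      by (simp add: g pieces_prod_def reduce_append_reduce_left)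
    moreover have "set ps \<subseteq> (A \<times> UNIV) \<times> {- int (Suc k)..int (Suc k)}"
      by (rule subset_trans[OF ps]) auto
    then have "set (ps @ [((a, e), 0)]) \<subseteq> (A \<times> UNIV) \<times> {- int (Suc k)..int (Suc k)}"
      using y ze Inl by simp
    ultimately show ?thesis
      using u len ze Inl ug unfolding pieces_bounded_def
      by (intro conjI exI[of _ "ps @ [((a, e), 0)]"]) simp_all
  next
    case (Inr x)
    define m where "m = - sgn_letter (x, e)"
    let ?ps = "map (\<lambda>(x, j). (x, m + j)) ps"
    have "length (reduce (u @ [(x, e)])) \<le> Suc k"
      using length_reduce[of "u @ [(x, e)]"] u by simp
    moreover have "aut_pow A \<psi> m g = pieces_prod A \<psi> ?ps"
      using aut_pow_pieces_prod[OF aut] ps g by blast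
    moreover have "set ?ps \<subseteq> (A \<times> UNIV) \<times> {- int (Suc k)..int (Suc k)}"
    proof
      fix p assume "p \<in> set ?ps"
      then obtain x j where xj: "(x, j) \<in> set ps" and p: "p = (x, m + j)" by auto
      have "x \<in> A \<times> UNIV" and "\<bar>j\<bar> \<le> int k" using subsetD[OF ps xj] by auto
      moreover have "\<bar>m\<bar> = 1" by (simp add: m_def sgn_letter_def)
      ultimately show "p \<in> (A \<times> UNIV) \<times> {- int (Suc k)..int (Suc k)}"
        using p by auto
    qed
    ultimately show ?thesis
      using len ze Inr ug unfolding pieces_bounded_def
      by (intro conjI exI[of _ ?ps]) (simp_all add: m_def)
  qed
qed

lemma pieces_bounded_eval_gam:
  assumes aut: "is_aut A \<psi>" and w: "w \<in> gen_words A"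
  shows "pieces_bounded A \<psi> (length w) (eval_gam A \<psi> w)"
  using w
proof (induction w rule: rev_induct)
  case Nil
  show ?case by (simp add: pieces_bounded_def eval_gam_def pieces_prod_def)
next
  case (snoc y w)
  then have "w \<in> gen_words A" and "\<forall>a. fst y = Inl a \<longrightarrow> a \<in> A"
    by (auto simp: gen_words_def)
  with snoc.IH show ?case
    by (simp add: eval_gam_def pieces_bounded_mult_gen[OF aut])
qed

subsection \<open>Length of the combing\<close>

lemma length_aut_pow_letter:
  assumes aut: "is_aut A \<psi>" and a: "a \<in> A"
  shows "length (aut_pow A \<psi> j [(a, e)]) \<le> dist_free A (aut_pow A \<psi> j [(a, True)])"
proof -
  have a_free: "[(a, True)] \<in> free_grp A" using a by (simp add: free_grp_letter)
  have "length (aut_pow A \<psi> j [(a, e)]) = length (aut_pow A \<psi> j [(a, True)])"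
  proof (cases e)
    case False
    then have "[(a, e)] = inv_word [(a, True)]" by (simp add: inv_letter_def)
    with a_free free_endo_aut_pow[OF aut]
    have "aut_pow A \<psi> j [(a, e)] = inv_word (aut_pow A \<psi> j [(a, True)])"
      unfolding free_endo_def by metis
    then show ?thesis by (simp add: inv_word_def)
  qed simp
  also have "\<dots> \<le> dist_free A (aut_pow A \<psi> j [(a, True)])"
    by (rule length_le_dist_free) (rule aut_pow_in_free_grp[OF aut a_free])
  finally show ?thesis .
qed

lemma length_pieces_prod:
  assumes aut: "is_aut A \<psi>" and "mono P"
    and P: "\<forall>a \<in> A. \<forall>n :: int. dist_free A (aut_pow A \<psi> n [(a, True)]) \<le> P (nat \<bar>n\<bar>)"
    and ps: "set ps \<subseteq> (A \<times> UNIV) \<times> {- int k..int k}"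
  shows "length (pieces_prod A \<psi> ps) \<le> length ps * P k"
proof -
  let ?F = "\<lambda>(x, j). aut_pow A \<psi> j [x]"
  have piece: "length (?F p) \<le> P k" if "p \<in> set ps" for p
  proof -
    obtain a e j where p: "p = ((a, e), j)" by (metis prod.exhaust)
    with that ps have a: "a \<in> A" and "j \<in> {- int k..int k}" by auto
    then have j: "nat \<bar>j\<bar> \<le> k" by auto
    have "length (aut_pow A \<psi> j [(a, e)]) \<le> dist_free A (aut_pow A \<psi> j [(a, True)])"
      by (rule length_aut_pow_letter[OF aut a])
    also have "\<dots> \<le> P (nat \<bar>j\<bar>)" using P a by blast
    also have "\<dots> \<le> P k" using \<open>mono P\<close> j by (simp add: monoD)
    finally show ?thesis by (simp add: p)
  qed
  have "length (pieces_prod A \<psi> ps) \<le> length (concat (map ?F ps))"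
    unfolding pieces_prod_def by (rule length_reduce)
  also have "\<dots> = (\<Sum>p \<leftarrow> ps. length (?F p))"
    by (simp add: length_concat comp_def)
  also have "\<dots> \<le> (\<Sum>_ \<leftarrow> ps. P k)"
    by (rule sum_list_mono) (rule piece)
  finally show ?thesis by (simp add: sum_list_triv)
qed

lemma length_comb_le_dist_gam:
  assumes aut: "is_aut A \<psi>" and "mono P"
    and P: "\<forall>a \<in> A. \<forall>n :: int. dist_free A (aut_pow A \<psi> n [(a, True)]) \<le> P (nat \<bar>n\<bar>)"
    and \<gamma>: "\<gamma> \<in> Gam A \<psi>"
  shows "length (comb \<gamma>) \<le> dist_gam A \<psi> \<gamma> + dist_gam A \<psi> \<gamma> * P (dist_gam A \<psi> \<gamma>)"
proof -
  have "\<exists>k. \<exists>w \<in> gen_words A. length w = k \<and> eval_gam A \<psi> w = \<gamma>"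
    using \<gamma> by (auto simp: Gam_def)
  from LeastI_ex[OF this] obtain w where w: "w \<in> gen_words A"
    and k: "length w = dist_gam A \<psi> \<gamma>" and "eval_gam A \<psi> w = \<gamma>"
    unfolding dist_gam_def by blast
  with pieces_bounded_eval_gam[OF aut w] obtain ps where
    u: "length (fst \<gamma>) \<le> length w" and len: "length ps \<le> length w"
    and ps: "set ps \<subseteq> (A \<times> UNIV) \<times> {- int (length w)..int (length w)}"
    and g: "snd \<gamma> = pieces_prod A \<psi> ps"
    unfolding pieces_bounded_def by auto
  have "length (snd \<gamma>) \<le> length ps * P (length w)"
    unfolding g by (rule length_pieces_prod[OF aut \<open>mono P\<close> P ps])
  also have "\<dots> \<le> length w * P (length w)" using len by (rule mult_le_mono1)
  finally show ?thesis using u k by (simp add: comb_def)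
qed

theorem proposition3p14:
  fixes A :: "'g set" and \<psi> :: "'g \<Rightarrow> 'g word" and P :: "nat \<Rightarrow> nat"
  assumes "finite A"
    and "is_aut A \<psi>"
    and "mono P"
    and "\<forall>a \<in> A. \<forall>n :: int. dist_free A (aut_pow A \<psi> n [(a, True)]) \<le> P (nat \<bar>n\<bar>)"
  shows "\<forall>n. comb_length A \<psi> n \<le> n * P n + n"
proof
  fix n
  let ?S = "{length (comb \<gamma>) | \<gamma>. \<gamma> \<in> Gam A \<psi> \<and> dist_gam A \<psi> \<gamma> \<le> n}"
  have bound: "x \<le> n * P n + n" if "x \<in> ?S" for x
  proof -
    from that obtain \<gamma> where x: "x = length (comb \<gamma>)" and \<gamma>: "\<gamma> \<in> Gam A \<psi>"
      and d: "dist_gam A \<psi> \<gamma> \<le> n" by blast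
    let ?k = "dist_gam A \<psi> \<gamma>"
    have "x \<le> ?k + ?k * P ?k" unfolding x by (rule length_comb_le_dist_gam[OF assms(2-4) \<gamma>])
    also have "\<dots> \<le> n + n * P n"
      using d \<open>mono P\<close> by (intro add_mono mult_le_mono) (auto dest: monoD)
    finally show ?thesis by simp
  qed
  have "([], []) \<in> Gam A \<psi>"
    unfolding Gam_def by (rule image_eqI[of _ _ "[]"]) (simp_all add: eval_gam_def gen_words_def)
  moreover have "dist_gam A \<psi> ([], []) = 0"
    unfolding dist_gam_def
    by (rule Least_eq_0) (auto simp: eval_gam_def gen_words_def intro!: bexI[of _ "[]"])
  ultimately have "?S \<noteq> {}" by fastforce
  moreover have "?S \<subseteq> {..n * P n + n}" using bound by (simp add: subset_eq)
  then have "finite ?S" by (rule finite_subset) simp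
  ultimately show "comb_length A \<psi> n \<le> n * P n + n"
    unfolding comb_length_def using bound by (intro Max.boundedI)
qed

end
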